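(* Let $(G_n)$ be a sequence of graphs with $\min_{v\in V}\delta_v=\omega(\log n)$, let $k\ge3$ be odd, $q\in(1/2,1]$ and $0\le p<p^\star_{k,q}$. Run the $(k,p,\mathcal B)$-Edge-Majority dynamics from the random initial configuration in which each node is $\mathcal R$ with probability $q$, independently. Let $q_0=q$ and $q_{t+1}=F_{p,k}(q_t)$. If $q\in(\varphi^-_{p,k},\mu_{p,k}]$, then there exists $T=T(p,k,q)$ such that $q_T>\mu_{p,k}$, and for all $\gamma>0$, $$\Pr\big(\forall t\le T,\ \forall v\in V:\ \phi_v^{(t)}\in[q_t-\gamma,q_t+\gamma]\big)=1-e^{-\omega(\log n)}.$$
   Context: $G_n=(V,E)$, $V=\{1,\dots,n\}$, $N(u)$ neighbourhood, $\delta_u=|N(u)|$; asymptotics as $n\to\infty$. States in $\{\mathcal R,\mathcal B\}$; $R^{(t)}$ the $\mathcal R$ nodes at round $t$; $\phi_u^{(t)}=|N(u)\cap R^{(t)}|/\delta_u$. $(k,p,\mathcal B)$-Edge-Majority: in each round $t\ge1$ every node $u$ independently samples $k$ neighbours uniformly with replacement; for each sampled $v$, independently, $u$ sees $v$ as $\mathcal B$ with probability $p$ and otherwise sees $v$'s true state at round $t-1$; $u$ adopts the state seen more often. $F_{p,k}(x)=\Pr[\mathrm{Bin}(k,(1-p)x)\ge(k+1)/2]$. $p_k^\star\in[1/9,1/2)$ is the (unique) value such that for $0\le p<p_k^\star$, $F_{p,k}(x)=x$ on $[0,1]$ has exactly three solutions $0<\varphi^-_{p,k}<\varphi^+_{p,k}$;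 for $p=p_k^\star$ exactly two, $0$ and $\varphi_{p,k}$ (set $\varphi^-_{p_k^\star,k}=\varphi_{p_k^\star,k}$); for $p>p_k^\star$ only $0$. $p^\star_{k,q}=\max\{p\in[0,p_k^\star]:\varphi^-_{p,k}\le q\}$. For $0\le p<p_k^\star$, $\mu_{p,k}$ is the unique point of $(\varphi^-_{p,k},\varphi^+_{p,k})$ with $F'_{p,k}(\mu_{p,k})=1$. *)

theory Defs
  imports "HOL-Probability.Probability" "HOL-Library.Landau_Symbols"
begin

text \<open>F_{p,k}(x) = Pr[Bin(k,(1-p)x) >= (k+1)/2], written out as the binomial tail sum.\<close>
definition F :: "real \<Rightarrow> nat \<Rightarrow> real \<Rightarrow> real" where
  "F p k x = (\<Sum>j\<in>{j. j \<le> k \<and> 2 * j \<ge> k + 1}.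
      real (k choose j) * ((1 - p) * x) ^ j * (1 - (1 - p) * x) ^ (k - j))"

definition fixset :: "real \<Rightarrow> nat \<Rightarrow> real set" where
  "fixset p k = {x \<in> {0..1}. F p k x = x}"

definition pk_star :: "nat \<Rightarrow> real" where
  "pk_star k = (THE ps. 1/9 \<le> ps \<and> ps < 1/2
      \<and> (\<forall>p. 0 \<le> p \<and> p < ps \<longrightarrow> card (fixset p k) = 3)
      \<and> card (fixset ps k) = 2
      \<and> (\<forall>p. ps < p \<and> p \<le> 1 \<longrightarrow> fixset p k = {0}))"

text \<open>phi^-: smallest nonzero fixed point (for p = p_k^star this is the unique nonzero one).\<close>
definition phi_minus :: "real \<Rightarrow> nat \<Rightarrow> real" where
  "phi_minus p k = Min (fixset p k - {0})"

definition phi_plus :: "real \<Rightarrow> nat \<Rightarrow> real" where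
  "phi_plus p k = Max (fixset p k)"

definition pkq_star :: "nat \<Rightarrow> real \<Rightarrow> real" where
  "pkq_star k q = (GREATEST p. 0 \<le> p \<and> p \<le> pk_star k \<and> phi_minus p k \<le> q)"

definition mu :: "real \<Rightarrow> nat \<Rightarrow> real" where
  "mu p k = (THE x. phi_minus p k < x \<and> x < phi_plus p k \<and> deriv (F p k) x = 1)"

definition q_seq :: "real \<Rightarrow> nat \<Rightarrow> real \<Rightarrow> nat \<Rightarrow> real" where
  "q_seq p k q t = (F p k ^^ t) q"

text \<open>G n is the adjacency relation of G_n on V = {1..n}.\<close>
definition nbhd :: "(nat \<Rightarrow> nat \<Rightarrow> nat \<Rightarrow> bool) \<Rightarrow> nat \<Rightarrow> nat \<Rightarrow> nat set" where
  "nbhd G n u = {v \<in> {1..n}. G n u v}"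

text \<open>A configuration is the indicator of the set of R nodes.
  One sample: a uniform neighbour v; with prob. p it is seen as B, else its true state.
  Result True = seen as R.\<close>
definition sample_seen :: "nat set \<Rightarrow> real \<Rightarrow> (nat \<Rightarrow> bool) \<Rightarrow> bool pmf" where
  "sample_seen Nu p c = do { v \<leftarrow> pmf_of_set Nu; b \<leftarrow> bernoulli_pmf p; return_pmf (\<not> b \<and> c v) }"

definition node_update :: "nat set \<Rightarrow> nat \<Rightarrow> real \<Rightarrow> (nat \<Rightarrow> bool) \<Rightarrow> bool pmf" where
  "node_update Nu k p c =
     map_pmf (\<lambda>s. 2 * card {i \<in> {..<k}. s i} > k) (Pi_pmf {..<k} False (\<lambda>_. sample_seen Nu p c))"

definition config_step ::
  "(nat \<Rightarrow> nat set) \<Rightarrow> nat set \<Rightarrow> nat \<Rightarrow> real \<Rightarrow> (nat \<Rightarrow> bool) \<Rightarrow> (nat \<Rightarrow> bool) pmf" where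
  "config_step N V k p c = Pi_pmf V False (\<lambda>u. node_update (N u) k p c)"

definition init_config :: "nat set \<Rightarrow> real \<Rightarrow> (nat \<Rightarrow> bool) pmf" where
  "init_config V q = Pi_pmf V False (\<lambda>_. bernoulli_pmf q)"

text \<open>traj N V k p q t: joint law of the configurations at rounds 0..t (list of length t+1).\<close>
primrec traj ::
  "(nat \<Rightarrow> nat set) \<Rightarrow> nat set \<Rightarrow> nat \<Rightarrow> real \<Rightarrow> real \<Rightarrow> nat \<Rightarrow> (nat \<Rightarrow> bool) list pmf" where
  "traj N V k p q 0 = map_pmf (\<lambda>c. [c]) (init_config V q)"
| "traj N V k p q (Suc t) =
     bind_pmf (traj N V k p q t) (\<lambda>cs. map_pmf (\<lambda>c. cs @ [c]) (config_step N V k p (last cs)))"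

definition phi :: "nat set \<Rightarrow> (nat \<Rightarrow> bool) \<Rightarrow> real" where
  "phi Nu c = real (card {w \<in> Nu. c w}) / real (card Nu)"

end

theory Submission
  imports Defs
begin

text \<open>The mean-field map factors as \<open>F p k x = maj k ((1 - p) x)\<close>, where \<open>maj k y\<close> is the
  probability that \<open>Bin(k, y) > k/2\<close>, so the nonzero fixed points of \<open>F p k\<close> are the solutions
  of \<open>maj k y / y = 1 / (1 - p)\<close>. This ratio increases strictly up to a point \<open>y* \<in> (1/2, 1)\<close>
  and decreases strictly after it, because \<open>y maj'(y) - maj(y)\<close> changes sign exactly once.
  Hence \<open>p_k* = 1 - y* / maj k y*\<close>, and for \<open>p < p_k*\<close> there are exactly two nonzero fixed
  points \<open>phi- < phi+\<close>, with \<open>F\<close> above the diagonal between them; so \<open>q_t\<close> increases past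
  \<open>mu \<in> (phi-, phi+)\<close> in finitely many steps.

  Conditionally on round \<open>t - 1\<close>, the nodes update independently and \<open>u\<close> becomes \<open>R\<close> with
  probability \<open>F(phi_u)\<close>. Hoeffding's inequality over the at least \<open>delta_min\<close> neighbours of a
  node, uniform continuity of \<open>F\<close> and a union bound over the \<open>n\<close> nodes and \<open>T + 1\<close> rounds
  bound the failure probability by \<open>(T + 1) n exp(-a delta_min) = exp(-omega(log n))\<close>.\<close>

section \<open>The noiseless majority function\<close>

definition maj :: "nat \<Rightarrow> real \<Rightarrow> real" where
  "maj k = F 0 k"

definition maj_deriv :: "nat \<Rightarrow> real \<Rightarrow> real" where
  "maj_deriv k y = real k * real ((k - 1) choose (k div 2)) * (y * (1 - y)) ^ (k div 2)"

lemma F_eq_maj: "F p k x = maj k ((1 - p) * x)"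
  by (simp add: F_def maj_def)

lemma majority_set_odd: "odd k \<Longrightarrow> {j. j \<le> k \<and> 2 * j \<ge> k + 1} = {Suc (k div 2)..<Suc k}"
  by (auto elim!: oddE)

lemma maj_eq_prob_binomial:
  assumes "0 \<le> y" "y \<le> 1"
  shows "maj k y = measure_pmf.prob (binomial_pmf k y) {j. k < 2 * j}"
proof -
  have "measure_pmf.prob (binomial_pmf k y) {j. k < 2 * j}
      = measure_pmf.prob (binomial_pmf k y) {j. j \<le> k \<and> 2 * j \<ge> k + 1}"
    using assms by (intro measure_eq_AE AE_pmfI) (auto simp: set_pmf_binomial_eq split: if_splits)
  also have "\<dots> = (\<Sum>j\<in>{j. j \<le> k \<and> 2 * j \<ge> k + 1}. pmf (binomial_pmf k y) j)"
    by (rule measure_measure_pmf_finite) auto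
  also have "\<dots> = maj k y"
    unfolding maj_def F_def using assms by (intro sum.cong refl) (auto simp: pmf_binomial)
  finally show ?thesis by simp
qed

lemma maj_bounds: "0 \<le> y \<Longrightarrow> y \<le> 1 \<Longrightarrow> 0 \<le> maj k y \<and> maj k y \<le> 1"
  using maj_eq_prob_binomial by simp

lemma continuous_on_maj: "continuous_on A (maj k)"
  unfolding maj_def F_def by (intro continuous_intros)

lemma continuous_on_F: "continuous_on A (F p k)"
  unfolding F_def by (intro continuous_intros)

lemma maj_0: "odd k \<Longrightarrow> maj k 0 = 0"
  unfolding maj_def F_def by (intro sum.neutral) auto

lemma maj_1:
  assumes "odd k"
  shows "maj k 1 = 1"
proof -
  have "maj k 1 = (\<Sum>j\<in>{Suc (k div 2)..<Suc k}. real (k choose j) * 0 ^ (k - j))"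
    unfolding maj_def F_def majority_set_odd[OF assms] by simp
  also have "\<dots> = (\<Sum>j\<in>{Suc (k div 2)..<k}. real (k choose j) * 0 ^ (k - j)) + 1"
    using assms by (subst sum.op_ivl_Suc) (auto elim!: oddE)
  also have "(\<Sum>j\<in>{Suc (k div 2)..<k}. real (k choose j) * 0 ^ (k - j)) = 0"
    by (intro sum.neutral) auto
  finally show ?thesis by simp
qed

lemma binomial_term_deriv_eq:
  assumes j: "0 < j" "j \<le> k"
  shows "real (k choose j) * (real j * y ^ (j - 1) * (1 - y) ^ (k - j)
        - y ^ j * (real (k - j) * (1 - y) ^ (k - j - 1)))
    = real k * real ((k - 1) choose (j - 1)) * y ^ (j - 1) * (1 - y) ^ (k - 1 - (j - 1))
      - real k * real ((k - 1) choose j) * y ^ j * (1 - y) ^ (k - 1 - j)"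
proof -
  have e1: "real (k choose j) * real j = real k * real ((k - 1) choose (j - 1))"
    using times_binomial_minus1_eq[OF j(1), of k] by (metis mult.commute of_nat_mult)
  have e2: "real (k choose j) * real (k - j) = real k * real ((k - 1) choose j)"
    using binomial_absorb_comp[of k j] by (metis mult.commute of_nat_mult)
  have x1: "k - 1 - (j - 1) = k - j" using j by simp
  have x2: "k - j - 1 = k - 1 - j" by simp
  show ?thesis
    unfolding x1 x2 e1[symmetric] e2[symmetric] by (simp add: algebra_simps)
qed

text \<open>The derivative of the binomial tail telescopes to its single boundary term.\<close>

lemma has_real_derivative_maj:
  assumes k: "odd k"
  shows "(maj k has_real_derivative maj_deriv k y) (at y)"
proof -
  define m where "m = k div 2"
  have km: "k = Suc (2 * m)" using k by (auto simp: m_def elim!: oddE)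
  define a where "a i = real k * real ((k - 1) choose i) * y ^ i * (1 - y) ^ (k - 1 - i)" for i
  have term_eq: "real (k choose j) * (real j * y ^ (j - 1) * (1 - y) ^ (k - j)
        - y ^ j * (real (k - j) * (1 - y) ^ (k - j - 1))) = a (j - 1) - a j"
    if "Suc m \<le> j" "j \<le> k" for j
    unfolding a_def using that by (intro binomial_term_deriv_eq) auto
  have "(maj k has_real_derivative (\<Sum>j\<in>{j. j \<le> k \<and> 2 * j \<ge> k + 1}.
      real (k choose j) * (real j * y ^ (j - 1) * (1 - y) ^ (k - j)
        - y ^ j * (real (k - j) * (1 - y) ^ (k - j - 1))))) (at y)"
    unfolding maj_def F_def
    apply (simp only: diff_zero mult_1)
    apply (rule DERIV_sum)
    apply (rule derivative_eq_intros refl | simp)+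
    apply (simp add: algebra_simps)
    done
  also have "(\<Sum>j\<in>{j. j \<le> k \<and> 2 * j \<ge> k + 1}.
      real (k choose j) * (real j * y ^ (j - 1) * (1 - y) ^ (k - j)
        - y ^ j * (real (k - j) * (1 - y) ^ (k - j - 1)))) = (\<Sum>j\<in>{Suc m..<Suc k}. a (j - 1) - a j)"
    unfolding majority_set_odd[OF k] m_def[symmetric] by (intro sum.cong refl term_eq) auto
  also have "\<dots> = (\<Sum>i\<in>{m..<k}. a i - a (Suc i))"
    using sum.shift_bounds_Suc_ivl[of "\<lambda>j. a (j - 1) - a j" m k] by simp
  also have "\<dots> = - (\<Sum>i\<in>{m..<k}. a (Suc i) - a i)"
    by (simp add: sum_negf[symmetric])
  also have "\<dots> = a m - a k"
    using km by (subst sum_Suc_diff') auto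
  also have "a m - a k = maj_deriv k y"
    unfolding a_def maj_deriv_def m_def[symmetric] using km by (simp add: power_mult_distrib)
  finally show ?thesis .
qed

lemma maj_deriv_symmetric: "maj_deriv k (1 - y) = maj_deriv k y"
  unfolding maj_deriv_def by (simp add: mult.commute)

lemma maj_symmetric:
  assumes k: "odd k"
  shows "maj k y + maj k (1 - y) = 1"
proof -
  have "((\<lambda>y. maj k y + maj k (1 - y)) has_real_derivative 0) (at y)" for y
  proof -
    have "((\<lambda>y. maj k y + maj k (1 - y)) has_real_derivative maj_deriv k y + maj_deriv k (1 - y) * (- 1)) (at y)"
      by (intro derivative_intros DERIV_chain2[OF has_real_derivative_maj[OF k]] has_real_derivative_maj[OF k])
        (auto intro!: derivative_eq_intros)
    then show ?thesis by (simp add: maj_deriv_symmetric)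
  qed
  then have "maj k y + maj k (1 - y) = maj k 0 + maj k (1 - 0)"
    using DERIV_isconst_all[of "\<lambda>y. maj k y + maj k (1 - y)" y 0] by blast
  then show ?thesis using maj_0[OF k] maj_1[OF k] by simp
qed

lemma maj_half: "odd k \<Longrightarrow> maj k (1/2) = 1/2"
  using maj_symmetric[of k "1/2"] by simp

lemma maj_deriv_strict_mono_lower:
  assumes k: "odd k" "3 \<le> k" and y: "0 \<le> y1" "y1 < y2" "y2 \<le> 1/2"
  shows "maj_deriv k y1 < maj_deriv k y2"
proof -
  have "y2 * (1 - y2) - y1 * (1 - y1) = (y2 - y1) * (1 - y1 - y2)"
    by (simp add: algebra_simps)
  also have "\<dots> > 0" using y by (intro mult_pos_pos) auto
  finally have "(y1 * (1 - y1)) ^ (k div 2) < (y2 * (1 - y2)) ^ (k div 2)"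
    using k y by (intro power_strict_mono) (auto elim!: oddE)
  moreover have "real k * real ((k - 1) choose (k div 2)) > 0"
    using k by (auto elim!: oddE)
  ultimately show ?thesis unfolding maj_deriv_def by (intro mult_strict_left_mono) auto
qed

lemma maj_deriv_strict_antimono_upper:
  assumes k: "odd k" "3 \<le> k" and y: "1/2 \<le> y1" "y1 < y2" "y2 \<le> 1"
  shows "maj_deriv k y2 < maj_deriv k y1"
  using maj_deriv_strict_mono_lower[OF k, of "1 - y2" "1 - y1"] y by (simp add: maj_deriv_symmetric)

lemma nonneg_between_zeros_if_deriv_sign_decreasing:
  fixes D g h :: "real \<Rightarrow> real"
  assumes deriv: "\<And>y. (D has_real_derivative g y * h y) (at y)"
    and g: "\<And>y. a \<le> y \<Longrightarrow> y \<le> b \<Longrightarrow> 0 \<le> g y"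
    and h: "\<And>y y'. a \<le> y \<Longrightarrow> y \<le> y' \<Longrightarrow> y' \<le> b \<Longrightarrow> h y' \<le> h y"
    and zeros: "D a = 0" "D b = 0" and y0: "a \<le> y0" "y0 \<le> b"
  shows "0 \<le> D y0"
proof (cases "0 \<le> h y0")
  case h_nonneg: True
  show ?thesis
  proof (cases "a = y0")
    case False
    then obtain z where z: "a < z" "z < y0" "D y0 - D a = (y0 - a) * (g z * h z)"
      using MVT2[of a y0 D "\<lambda>y. g y * h y"] deriv y0 by force
    have "0 \<le> g z * h z"
      using g[of z] h[of z y0] h_nonneg z y0 by simp
    then show ?thesis using z zeros by simp
  qed (use zeros in simp)
next
  case h_neg: False
  show ?thesis
  proof (cases "y0 = b")
    case False
    then obtain z where z: "y0 < z" "z < b" "D b - D y0 = (b - y0) * (g z * h z)"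
      using MVT2[of y0 b D "\<lambda>y. g y * h y"] deriv y0 by force
    have "g z * h z \<le> 0"
      using g[of z] h[of y0 z] h_neg z y0 by (simp add: mult_nonneg_nonpos)
    then have "(b - y0) * (g z * h z) \<le> 0" using z by (simp add: mult_nonneg_nonpos)
    then show ?thesis using z zeros by simp
  qed (use zeros in simp)
qed

text \<open>The derivative of \<open>maj (k + 2) - maj k\<close> is \<open>s\<^sup>m (c' s - c)\<close> with \<open>s = y (1 - y)\<close>,
  which changes sign only once on \<open>[1/2, 1]\<close>.\<close>

lemma maj_le_maj_add_2:
  assumes k: "odd k" and y0: "1/2 \<le> y0" "y0 \<le> 1"
  shows "maj k y0 \<le> maj (k + 2) y0"
proof -
  define m where "m = k div 2"
  define c where "c = real k * real ((k - 1) choose m)"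
  define c' where "c' = real (k + 2) * real ((k + 1) choose Suc m)"
  define s where "s y = y * (1 - y)" for y :: real
  have "((\<lambda>y. maj (k + 2) y - maj k y) has_real_derivative s y ^ m * (c' * s y - c)) (at y)" for y
  proof -
    have "((\<lambda>y. maj (k + 2) y - maj k y) has_real_derivative maj_deriv (k + 2) y - maj_deriv k y) (at y)"
      using k by (intro derivative_intros has_real_derivative_maj) auto
    moreover have "(k + 2) div 2 = Suc m" using k by (auto simp: m_def elim!: oddE)
    then have "maj_deriv (k + 2) y - maj_deriv k y = s y ^ m * (c' * s y - c)"
      unfolding maj_deriv_def m_def[symmetric] c_def c'_def s_def by (simp add: algebra_simps)
    ultimately show ?thesis by simp
  qed
  moreover have "s y' \<le> s y" if "1/2 \<le> y" "y \<le> y'" for y y'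
  proof -
    have "s y - s y' = (y' - y) * (y + y' - 1)" by (simp add: s_def algebra_simps)
    also have "\<dots> \<ge> 0" using that by simp
    finally show ?thesis by simp
  qed
  then have "c' * s y' - c \<le> c' * s y - c" if "1/2 \<le> y" "y \<le> y'" for y y'
    using that by (simp add: c'_def mult_left_mono)
  ultimately have "0 \<le> maj (k + 2) y0 - maj k y0"
    using k y0 by (intro nonneg_between_zeros_if_deriv_sign_decreasing[where a = "1/2" and b = 1])
      (auto simp: s_def maj_half maj_1)
  then show ?thesis by simp
qed

lemma maj_three_quarters:
  assumes "odd k" "3 \<le> k"
  shows "maj k (3/4) \<ge> 27/32"
proof -
  define m where "m = (k - 3) div 2"
  have "k = 3 + 2 * m"
    using assms unfolding m_def by presburger
  moreover have "maj (3 + 2 * m) (3/4) \<ge> 27/32"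
  proof (induction m)
    case 0
    have "{j. j \<le> (3::nat) \<and> 2 * j \<ge> 3 + 1} = {2, 3}" by auto
    then have "maj 3 (3/4) = 27/32" unfolding maj_def F_def by (simp add: numeral_eq_Suc)
    then show ?case by simp
  next
    case (Suc m)
    have "maj (3 + 2 * m) (3/4) \<le> maj (3 + 2 * m + 2) (3/4)"
      by (intro maj_le_maj_add_2) auto
    then show ?case using Suc by simp
  qed
  ultimately show ?thesis by simp
qed


section \<open>The ratio \<open>maj k y / y\<close>\<close>

definition maj_ratio :: "nat \<Rightarrow> real \<Rightarrow> real" where
  "maj_ratio k y = maj k y / y"

definition ratio_numer :: "nat \<Rightarrow> real \<Rightarrow> real" where
  "ratio_numer k y = y * maj_deriv k y - maj k y"

lemma has_real_derivative_maj_ratio: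
  assumes "odd k" "y \<noteq> 0"
  shows "(maj_ratio k has_real_derivative ratio_numer k y / y\<^sup>2) (at y)"
proof -
  have "((\<lambda>y. maj k y / y) has_real_derivative (maj_deriv k y * y - maj k y * 1) / (y * y)) (at y)"
    using assms by (intro DERIV_divide has_real_derivative_maj DERIV_ident)
  then show ?thesis
    unfolding maj_ratio_def[abs_def] ratio_numer_def by (simp add: power2_eq_square mult.commute)
qed

lemma continuous_on_maj_ratio: "0 \<notin> A \<Longrightarrow> continuous_on A (maj_ratio k)"
  unfolding maj_ratio_def[abs_def] by (intro continuous_intros continuous_on_maj) auto

lemma maj_ratio_half: "odd k \<Longrightarrow> maj_ratio k (1/2) = 1"
  by (simp add: maj_ratio_def maj_half)

lemma maj_ratio_1: "odd k \<Longrightarrow> maj_ratio k 1 = 1"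
  by (simp add: maj_ratio_def maj_1)

lemma ratio_numer_strict_mono_lower:
  assumes k: "odd k" "3 \<le> k" and y: "0 \<le> y1" "y1 < y2" "y2 \<le> 1/2"
  shows "ratio_numer k y1 < ratio_numer k y2"
proof -
  obtain z where z: "y1 < z" "z < y2" "maj k y2 - maj k y1 = (y2 - y1) * maj_deriv k z"
    using MVT2[OF y(2), of "maj k" "maj_deriv k"] has_real_derivative_maj[OF k(1)] by blast
  have "(y2 - y1) * maj_deriv k z < (y2 - y1) * maj_deriv k y2"
    using maj_deriv_strict_mono_lower[OF k, of z y2] y z by (intro mult_strict_left_mono) auto
  moreover have "y1 * maj_deriv k y1 \<le> y1 * maj_deriv k y2"
    using maj_deriv_strict_mono_lower[OF k, of y1 y2] y by (intro mult_left_mono) auto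
  ultimately show ?thesis
    unfolding ratio_numer_def using z(3) by (simp add: algebra_simps)
qed

lemma ratio_numer_strict_antimono_upper:
  assumes k: "odd k" "3 \<le> k" and y: "1/2 \<le> y1" "y1 < y2" "y2 \<le> 1"
  shows "ratio_numer k y2 < ratio_numer k y1"
proof -
  obtain z where z: "y1 < z" "z < y2" "maj k y2 - maj k y1 = (y2 - y1) * maj_deriv k z"
    using MVT2[OF y(2), of "maj k" "maj_deriv k"] has_real_derivative_maj[OF k(1)] by blast
  have "(y2 - y1) * maj_deriv k y2 < (y2 - y1) * maj_deriv k z"
    using maj_deriv_strict_antimono_upper[OF k, of z y2] y z by (intro mult_strict_left_mono) auto
  moreover have "y1 * maj_deriv k y2 \<le> y1 * maj_deriv k y1"
    using maj_deriv_strict_antimono_upper[OF k, of y1 y2] y by (intro mult_left_mono) auto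
  ultimately show ?thesis
    unfolding ratio_numer_def using z(3) by (simp add: algebra_simps)
qed

lemma ratio_numer_pos_lower:
  assumes k: "odd k" "3 \<le> k" and y: "0 < y" "y \<le> 1/2"
  shows "ratio_numer k y > 0"
  using ratio_numer_strict_mono_lower[OF k, of 0 y] y maj_0[OF k(1)] by (simp add: ratio_numer_def)

lemma ratio_numer_1: "odd k \<Longrightarrow> 3 \<le> k \<Longrightarrow> ratio_numer k 1 = -1"
  by (auto simp: ratio_numer_def maj_deriv_def maj_1 elim!: oddE)

definition ratio_argmax :: "nat \<Rightarrow> real" where
  "ratio_argmax k = (SOME y. 1/2 < y \<and> y < 1 \<and> ratio_numer k y = 0)"

lemma ratio_argmax:
  assumes k: "odd k" "3 \<le> k"
  shows "1/2 < ratio_argmax k" "ratio_argmax k < 1" "ratio_numer k (ratio_argmax k) = 0"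
proof -
  have "continuous_on {1/2..1} (ratio_numer k)"
    unfolding ratio_numer_def maj_deriv_def by (intro continuous_intros continuous_on_maj)
  then obtain y where y: "1/2 \<le> y" "y \<le> 1" "ratio_numer k y = 0"
    using IVT2'[of "ratio_numer k" 1 0 "1/2"] ratio_numer_1[OF k] ratio_numer_pos_lower[OF k, of "1/2"]
    by force
  moreover have "y \<noteq> 1/2" "y \<noteq> 1"
    using y ratio_numer_1[OF k] ratio_numer_pos_lower[OF k, of "1/2"] by force+
  ultimately have "\<exists>y. 1/2 < y \<and> y < 1 \<and> ratio_numer k y = 0" by force
  then have "1/2 < ratio_argmax k \<and> ratio_argmax k < 1 \<and> ratio_numer k (ratio_argmax k) = 0"
    unfolding ratio_argmax_def by (rule someI_ex)
  then show "1/2 < ratio_argmax k" "ratio_argmax k < 1" "ratio_numer k (ratio_argmax k) = 0"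
    by auto
qed

lemma ratio_numer_pos:
  assumes k: "odd k" "3 \<le> k" and y: "0 < y" "y < ratio_argmax k"
  shows "ratio_numer k y > 0"
proof (cases "y \<le> 1/2")
  case True
  then show ?thesis using ratio_numer_pos_lower[OF k] y by simp
next
  case False
  then show ?thesis
    using ratio_numer_strict_antimono_upper[OF k, of y "ratio_argmax k"] y ratio_argmax[OF k] by simp
qed

lemma ratio_numer_neg:
  assumes k: "odd k" "3 \<le> k" and y: "ratio_argmax k < y" "y \<le> 1"
  shows "ratio_numer k y < 0"
  using ratio_numer_strict_antimono_upper[OF k, of "ratio_argmax k" y] y ratio_argmax[OF k] by simp

lemma maj_ratio_strict_mono:
  assumes k: "odd k" "3 \<le> k" and y: "0 < a" "a < b" "b \<le> ratio_argmax k"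
  shows "maj_ratio k a < maj_ratio k b"
proof -
  obtain z where z: "a < z" "z < b" "maj_ratio k b - maj_ratio k a = (b - a) * (ratio_numer k z / z\<^sup>2)"
    using MVT2[OF y(2), of "maj_ratio k" "\<lambda>y. ratio_numer k y / y\<^sup>2"]
      has_real_derivative_maj_ratio[OF k(1)] y by force
  have "ratio_numer k z > 0" using ratio_numer_pos[OF k, of z] z y by simp
  then have "(b - a) * (ratio_numer k z / z\<^sup>2) > 0" using z y by simp
  then show ?thesis using z by simp
qed

lemma maj_ratio_strict_antimono:
  assumes k: "odd k" "3 \<le> k" and y: "ratio_argmax k \<le> a" "a < b" "b \<le> 1"
  shows "maj_ratio k b < maj_ratio k a"
proof -
  have a: "0 < a" using y ratio_argmax[OF k] by simp
  obtain z where z: "a < z" "z < b" "maj_ratio k b - maj_ratio k a = (b - a) * (ratio_numer k z / z\<^sup>2)"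
    using MVT2[OF y(2), of "maj_ratio k" "\<lambda>y. ratio_numer k y / y\<^sup>2"]
      has_real_derivative_maj_ratio[OF k(1)] a by force
  have "ratio_numer k z < 0" using ratio_numer_neg[OF k, of z] z y by simp
  then have "(b - a) * (ratio_numer k z / z\<^sup>2) < 0"
    using z y a by (simp add: mult_pos_neg divide_neg_pos)
  then show ?thesis using z by simp
qed

definition ratio_max :: "nat \<Rightarrow> real" where
  "ratio_max k = maj_ratio k (ratio_argmax k)"

lemma maj_ratio_le_ratio_max:
  assumes k: "odd k" "3 \<le> k" and y: "0 < y" "y \<le> 1"
  shows "maj_ratio k y \<le> ratio_max k"
  using maj_ratio_strict_mono[OF k, of y "ratio_argmax k"] maj_ratio_strict_antimono[OF k, of "ratio_argmax k" y] y
  unfolding ratio_max_def by (cases y "ratio_argmax k" rule: linorder_cases) auto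

lemma ratio_max_bounds:
  assumes k: "odd k" "3 \<le> k"
  shows "9/8 \<le> ratio_max k" "ratio_max k < 2"
proof -
  have "9/8 \<le> maj_ratio k (3/4)"
    using maj_three_quarters[OF k] by (simp add: maj_ratio_def)
  then show "9/8 \<le> ratio_max k"
    using maj_ratio_le_ratio_max[OF k, of "3/4"] by simp
  have y: "1/2 < ratio_argmax k" "ratio_argmax k < 1"
    using ratio_argmax[OF k] by auto
  then have "ratio_max k \<le> 1 / ratio_argmax k"
    using maj_bounds[of "ratio_argmax k" k] unfolding ratio_max_def maj_ratio_def
    by (simp add: divide_right_mono)
  also have "\<dots> < 2" using y by (simp add: field_simps)
  finally show "ratio_max k < 2" .
qed


section \<open>Fixed points of the mean-field map\<close>

definition ratio_level :: "nat \<Rightarrow> real \<Rightarrow> real set" where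
  "ratio_level k c = {y. 0 < y \<and> y \<le> 1 \<and> maj_ratio k y = c}"

lemma ratio_level_below_max:
  assumes k: "odd k" "3 \<le> k" and c: "1 \<le> c" "c < ratio_max k"
  obtains y1 y2 where "1/2 \<le> y1" "y1 < ratio_argmax k" "ratio_argmax k < y2" "y2 \<le> 1"
    "ratio_level k c = {y1, y2}"
proof -
  let ?ym = "ratio_argmax k"
  have ym: "1/2 < ?ym" "?ym < 1" using ratio_argmax[OF k] by auto
  obtain y1 where y1: "1/2 \<le> y1" "y1 \<le> ?ym" "maj_ratio k y1 = c"
    using IVT'[of "maj_ratio k" "1/2" c ?ym] c ym maj_ratio_half[OF k(1)]
    by (force intro!: continuous_on_maj_ratio simp: ratio_max_def)
  obtain y2 where y2: "?ym \<le> y2" "y2 \<le> 1" "maj_ratio k y2 = c"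
    using IVT2'[of "maj_ratio k" 1 c ?ym] c ym maj_ratio_1[OF k(1)]
    by (force intro!: continuous_on_maj_ratio simp: ratio_max_def)
  have y1_less: "y1 < ?ym" and y2_greater: "?ym < y2"
    using y1 y2 c by (auto simp: ratio_max_def order.order_iff_strict)
  have "y = y1" if "0 < y" "y \<le> ?ym" "maj_ratio k y = c" for y
    using maj_ratio_strict_mono[OF k, of y y1] maj_ratio_strict_mono[OF k, of y1 y] that y1 ym
    by (cases y y1 rule: linorder_cases) auto
  moreover have "y = y2" if "?ym < y" "y \<le> 1" "maj_ratio k y = c" for y
    using maj_ratio_strict_antimono[OF k, of y y2] maj_ratio_strict_antimono[OF k, of y2 y] that y2
    by (cases y y2 rule: linorder_cases) auto
  ultimately have "ratio_level k c = {y1, y2}"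
    using y1 y2 ym unfolding ratio_level_def by (force simp: not_le)
  then show ?thesis using that y1 y1_less y2 y2_greater by blast
qed

lemma ratio_level_max:
  assumes k: "odd k" "3 \<le> k"
  shows "ratio_level k (ratio_max k) = {ratio_argmax k}"
proof -
  have "y = ratio_argmax k" if "0 < y" "y \<le> 1" "maj_ratio k y = ratio_max k" for y
    using maj_ratio_strict_mono[OF k, of y "ratio_argmax k"]
      maj_ratio_strict_antimono[OF k, of "ratio_argmax k" y] that
    by (cases y "ratio_argmax k" rule: linorder_cases) (auto simp: ratio_max_def)
  then show ?thesis
    using ratio_argmax[OF k] by (auto simp: ratio_level_def ratio_max_def)
qed

lemma ratio_level_above_max:
  "odd k \<Longrightarrow> 3 \<le> k \<Longrightarrow> ratio_max k < c \<Longrightarrow> ratio_level k c = {}"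
  using maj_ratio_le_ratio_max by (force simp: ratio_level_def)

lemma fixset_eq_ratio_level:
  assumes k: "odd k" and p: "0 \<le> p" "p < 1"
  shows "fixset p k = insert 0 ((\<lambda>y. y / (1 - p)) ` ratio_level k (1 / (1 - p)))"
proof (intro set_eqI iffI)
  fix x assume "x \<in> fixset p k"
  then have x: "0 \<le> x" "x \<le> 1" "maj k ((1 - p) * x) = x"
    by (auto simp: fixset_def F_eq_maj)
  show "x \<in> insert 0 ((\<lambda>y. y / (1 - p)) ` ratio_level k (1 / (1 - p)))"
  proof (cases "x = 0")
    case False
    then have "(1 - p) * x \<in> ratio_level k (1 / (1 - p))"
      using x p by (auto simp: ratio_level_def maj_ratio_def mult_le_one)
    moreover have "x = (1 - p) * x / (1 - p)" using p by simp
    ultimately show ?thesis by blast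
  qed simp
next
  fix x assume "x \<in> insert 0 ((\<lambda>y. y / (1 - p)) ` ratio_level k (1 / (1 - p)))"
  then consider "x = 0" | y where "y \<in> ratio_level k (1 / (1 - p))" "x = y / (1 - p)" by blast
  then show "x \<in> fixset p k"
  proof cases
    case 1
    then show ?thesis by (simp add: fixset_def F_eq_maj maj_0 k)
  next
    case 2
    then have y: "0 < y" "y \<le> 1" "maj k y = y / (1 - p)"
      using p by (auto simp: ratio_level_def maj_ratio_def field_simps)
    moreover have "(1 - p) * x = y" using 2 p by simp
    ultimately show ?thesis
      using maj_bounds[of y k] 2 p unfolding fixset_def F_eq_maj by simp
  qed
qed

lemma crit_bounds:
  assumes k: "odd k" "3 \<le> k"
  shows "1/9 \<le> 1 - 1 / ratio_max k" "1 - 1 / ratio_max k < 1/2"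
  using ratio_max_bounds[OF k] by (auto simp: field_simps)

lemma less_crit_iff:
  assumes k: "odd k" "3 \<le> k" and p: "p < 1"
  shows "p < 1 - 1 / ratio_max k \<longleftrightarrow> 1 / (1 - p) < ratio_max k"
    and "p = 1 - 1 / ratio_max k \<longleftrightarrow> 1 / (1 - p) = ratio_max k"
  using ratio_max_bounds[OF k] p by (auto simp: field_simps)

lemma fixset_below_crit:
  assumes k: "odd k" "3 \<le> k" and p: "0 \<le> p" "p < 1 - 1 / ratio_max k"
  obtains y1 y2 where "1/2 \<le> y1" "y1 < ratio_argmax k" "ratio_argmax k < y2" "y2 \<le> 1"
    "maj_ratio k y1 = 1 / (1 - p)" "maj_ratio k y2 = 1 / (1 - p)"
    "phi_minus p k = y1 / (1 - p)" "phi_plus p k = y2 / (1 - p)"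
    "fixset p k = {0, y1 / (1 - p), y2 / (1 - p)}"
proof -
  have p1: "p < 1" using p crit_bounds[OF k] by simp
  have c: "1 \<le> 1 / (1 - p)" "1 / (1 - p) < ratio_max k"
    using p p1 less_crit_iff[OF k p1] by auto
  obtain y1 y2 where y: "1/2 \<le> y1" "y1 < ratio_argmax k" "ratio_argmax k < y2" "y2 \<le> 1"
    and level: "ratio_level k (1 / (1 - p)) = {y1, y2}"
    using ratio_level_below_max[OF k c] by blast
  have fix_eq: "fixset p k = {0, y1 / (1 - p), y2 / (1 - p)}"
    using fixset_eq_ratio_level[OF k(1) p(1) p1] level by simp
  have order: "0 < y1 / (1 - p)" "y1 / (1 - p) < y2 / (1 - p)"
    using y p1 by (auto simp: divide_strict_right_mono)
  then have "fixset p k - {0} = {y1 / (1 - p), y2 / (1 - p)}"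
    using fix_eq by auto
  then have "phi_minus p k = y1 / (1 - p)" "phi_plus p k = y2 / (1 - p)"
    using order fix_eq by (simp_all add: phi_minus_def phi_plus_def)
  moreover have "maj_ratio k y1 = 1 / (1 - p)" "maj_ratio k y2 = 1 / (1 - p)"
    using level by (auto simp: ratio_level_def set_eq_iff)
  ultimately show ?thesis using that y fix_eq by blast
qed

lemma card_fixset_below_crit:
  assumes k: "odd k" "3 \<le> k" and p: "0 \<le> p" "p < 1 - 1 / ratio_max k"
  shows "card (fixset p k) = 3"
proof -
  obtain y1 y2 where "1/2 \<le> y1" "y1 < y2" "fixset p k = {0, y1 / (1 - p), y2 / (1 - p)}"
    using fixset_below_crit[OF k p] by (metis order.strict_trans)
  moreover have "p < 1" using p crit_bounds[OF k] by simp
  ultimately show ?thesis by (simp add: card_insert_if divide_strict_right_mono)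
qed

lemma fixset_crit:
  assumes k: "odd k" "3 \<le> k"
  shows "fixset (1 - 1 / ratio_max k) k = {0, ratio_argmax k * ratio_max k}"
  using fixset_eq_ratio_level[OF k(1), of "1 - 1 / ratio_max k"] ratio_level_max[OF k] ratio_max_bounds[OF k]
  by simp

lemma fixset_above_crit:
  assumes k: "odd k" "3 \<le> k" and p: "1 - 1 / ratio_max k < p" "p \<le> 1"
  shows "fixset p k = {0}"
proof (cases "p = 1")
  case True
  then show ?thesis by (auto simp: fixset_def F_eq_maj maj_0 k)
next
  case False
  then have p1: "p < 1" using p by simp
  have "0 \<le> p" using p crit_bounds[OF k] by simp
  moreover have "ratio_max k < 1 / (1 - p)"
    using less_crit_iff[OF k p1] p by (simp add: not_less_iff_gr_or_eq)
  ultimately show ?thesis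
    using fixset_eq_ratio_level[OF k(1) _ p1] ratio_level_above_max[OF k] by simp
qed

lemma card_fixset_crit:
  assumes k: "odd k" "3 \<le> k"
  shows "card (fixset (1 - 1 / ratio_max k) k) = 2"
  using fixset_crit[OF k] ratio_argmax[OF k] ratio_max_bounds[OF k] by simp

lemma pk_star_eq:
  assumes k: "odd k" "3 \<le> k"
  shows "pk_star k = 1 - 1 / ratio_max k"
  unfolding pk_star_def
proof (rule the_equality)
  show "1/9 \<le> 1 - 1 / ratio_max k \<and> 1 - 1 / ratio_max k < 1/2
      \<and> (\<forall>p. 0 \<le> p \<and> p < 1 - 1 / ratio_max k \<longrightarrow> card (fixset p k) = 3)
      \<and> card (fixset (1 - 1 / ratio_max k) k) = 2
      \<and> (\<forall>p. 1 - 1 / ratio_max k < p \<and> p \<le> 1 \<longrightarrow> fixset p k = {0})"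
    using crit_bounds[OF k] card_fixset_below_crit[OF k] card_fixset_crit[OF k] fixset_above_crit[OF k]
    by auto
next
  fix ps assume ps: "1/9 \<le> ps \<and> ps < 1/2
      \<and> (\<forall>p. 0 \<le> p \<and> p < ps \<longrightarrow> card (fixset p k) = 3)
      \<and> card (fixset ps k) = 2
      \<and> (\<forall>p. ps < p \<and> p \<le> 1 \<longrightarrow> fixset p k = {0})"
  then show "ps = 1 - 1 / ratio_max k"
    using card_fixset_below_crit[OF k, of ps] card_fixset_crit[OF k] crit_bounds[OF k]
    by (cases ps "1 - 1 / ratio_max k" rule: linorder_cases) auto
qed

lemma pk_star_bounds:
  assumes k: "odd k" "3 \<le> k"
  shows "1/9 \<le> pk_star k" "pk_star k < 1/2"
  using crit_bounds[OF k] by (simp_all add: pk_star_eq[OF k])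

lemma phi_minus_up_to_pk_star:
  assumes k: "odd k" "3 \<le> k" and p: "0 \<le> p" "p \<le> pk_star k"
  shows "1/2 \<le> (1 - p) * phi_minus p k" "(1 - p) * phi_minus p k \<le> ratio_argmax k"
    and "maj_ratio k ((1 - p) * phi_minus p k) = 1 / (1 - p)"
proof -
  have p1: "p < 1" using p pk_star_bounds[OF k] by simp
  have "1/2 \<le> (1 - p) * phi_minus p k \<and> (1 - p) * phi_minus p k \<le> ratio_argmax k
      \<and> maj_ratio k ((1 - p) * phi_minus p k) = 1 / (1 - p)"
  proof (cases "p = pk_star k")
    case True
    then have "1 - p = 1 / ratio_max k" using pk_star_eq[OF k] by simp
    moreover have "phi_minus p k = ratio_argmax k * ratio_max k"
      using True fixset_crit[OF k] ratio_argmax[OF k] ratio_max_bounds[OF k]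
      by (simp add: phi_minus_def pk_star_eq[OF k])
    ultimately show ?thesis
      using ratio_argmax[OF k] ratio_max_bounds[OF k] by (simp add: ratio_max_def)
  next
    case False
    then have "p < 1 - 1 / ratio_max k" using p pk_star_eq[OF k] by simp
    then obtain y1 where "1/2 \<le> y1" "y1 < ratio_argmax k" "maj_ratio k y1 = 1 / (1 - p)"
        "phi_minus p k = y1 / (1 - p)"
      by (rule fixset_below_crit[OF k p(1)]) (rule that, assumption+)
    then show ?thesis using p1 by simp
  qed
  then show "1/2 \<le> (1 - p) * phi_minus p k" "(1 - p) * phi_minus p k \<le> ratio_argmax k"
      "maj_ratio k ((1 - p) * phi_minus p k) = 1 / (1 - p)"
    by auto
qed

lemma phi_minus_0:
  assumes k: "odd k" "3 \<le> k"
  shows "phi_minus 0 k = 1/2"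
proof -
  have y: "1/2 \<le> phi_minus 0 k" "phi_minus 0 k \<le> ratio_argmax k" "maj_ratio k (phi_minus 0 k) = 1"
    using phi_minus_up_to_pk_star[OF k, of 0] pk_star_bounds[OF k] by simp_all
  show ?thesis
    using maj_ratio_strict_mono[OF k, of "1/2" "phi_minus 0 k"] maj_ratio_half[OF k(1)] y
    by (cases "phi_minus 0 k = 1/2") auto
qed

lemma phi_minus_le_iff:
  assumes k: "odd k" "3 \<le> k" and q: "1/2 < q" "q \<le> 1" and p: "0 \<le> p" "p \<le> pk_star k"
  shows "phi_minus p k \<le> q \<longleftrightarrow> q \<le> F p k q \<or> ratio_argmax k \<le> (1 - p) * q"
proof -
  have p1: "p < 1" using p pk_star_bounds[OF k] by simp
  define y where "y = (1 - p) * phi_minus p k"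
  define z where "z = (1 - p) * q"
  have y: "1/2 \<le> y" "y \<le> ratio_argmax k" "maj_ratio k y = 1 / (1 - p)"
    using phi_minus_up_to_pk_star[OF k p] by (simp_all add: y_def)
  have z: "0 < z" using p1 q by (simp add: z_def)
  have "phi_minus p k \<le> q \<longleftrightarrow> y \<le> z"
    using p1 by (simp add: y_def z_def)
  also have "\<dots> \<longleftrightarrow> q \<le> F p k q \<or> ratio_argmax k \<le> z"
  proof (cases "ratio_argmax k \<le> z")
    case True
    then show ?thesis using y by simp
  next
    case False
    have "y \<le> z \<longleftrightarrow> maj_ratio k y \<le> maj_ratio k z"
      using maj_ratio_strict_mono[OF k, of y z] maj_ratio_strict_mono[OF k, of z y] y z False
      by (cases y z rule: linorder_cases) auto
    also have "\<dots> \<longleftrightarrow> 1 / (1 - p) \<le> maj k z / z"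
      using y by (simp add: maj_ratio_def)
    also have "\<dots> \<longleftrightarrow> z / (1 - p) \<le> maj k z"
      using z by (simp add: pos_le_divide_eq)
    finally show ?thesis using False p1 by (simp add: z_def F_eq_maj)
  qed
  finally show ?thesis by (simp add: z_def)
qed

text \<open>The admissible \<open>p\<close> in the definition of \<^const>\<open>pkq_star\<close> form a closed set by
  \<open>phi_minus_le_iff\<close>, so the \<open>GREATEST\<close> there is attained and is not a junk value.\<close>

lemma less_pkq_star_imp_less_pk_star:
  assumes k: "odd k" "3 \<le> k" and q: "1/2 < q" "q \<le> 1" and p: "p < pkq_star k q"
  shows "p < pk_star k"
proof -
  define S where "S = {p. 0 \<le> p \<and> p \<le> pk_star k \<and> (q \<le> F p k q \<or> ratio_argmax k \<le> (1 - p) * q)}"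
  have S_iff: "(0 \<le> p \<and> p \<le> pk_star k \<and> phi_minus p k \<le> q) \<longleftrightarrow> p \<in> S" for p
    using phi_minus_le_iff[OF k q, of p] by (auto simp: S_def)
  have F_cont: "continuous_on UNIV (\<lambda>p. F p k q)"
    unfolding F_def by (intro continuous_intros)
  have "closed S" unfolding S_def
    by (intro closed_Collect_conj closed_Collect_disj closed_Collect_le continuous_intros
          continuous_on_subset[OF F_cont]) auto
  moreover have bdd: "bdd_above S" by (auto simp: S_def bdd_above_def)
  moreover have "0 \<in> S"
    using S_iff[of 0] phi_minus_0[OF k] pk_star_bounds[OF k] q by simp
  ultimately have Sup_in: "Sup S \<in> S" using closed_contains_Sup by blast
  have "pkq_star k q = Sup S"
    unfolding pkq_star_def
  proof (rule Greatest_equality)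
    show "0 \<le> Sup S \<and> Sup S \<le> pk_star k \<and> phi_minus (Sup S) k \<le> q"
      using S_iff Sup_in by blast
  next
    fix y assume "0 \<le> y \<and> y \<le> pk_star k \<and> phi_minus y k \<le> q"
    then show "y \<le> Sup S" using S_iff cSup_upper[OF _ bdd] by blast
  qed
  then show ?thesis using p Sup_in by (auto simp: S_def)
qed


lemma fixed_points_below_pk_star:
  assumes k: "odd k" "3 \<le> k" and p: "0 \<le> p" "p < pk_star k"
  shows "fixset p k = {0, phi_minus p k, phi_plus p k}" "0 < phi_minus p k"
    "phi_minus p k < phi_plus p k" "phi_plus p k \<le> 1"
proof -
  have p1: "p < 1" using p pk_star_bounds[OF k] by simp
  have "p < 1 - 1 / ratio_max k" using p pk_star_eq[OF k] by simp
  then obtain y1 y2 where "1/2 \<le> y1" "y1 < ratio_argmax k" "ratio_argmax k < y2" "y2 \<le> 1"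
      "phi_minus p k = y1 / (1 - p)" "phi_plus p k = y2 / (1 - p)"
      "fixset p k = {0, y1 / (1 - p), y2 / (1 - p)}"
    by (rule fixset_below_crit[OF k p(1)]) (rule that, assumption+)
  then show fixed: "fixset p k = {0, phi_minus p k, phi_plus p k}"
    and "0 < phi_minus p k" "phi_minus p k < phi_plus p k"
    using p1 by (simp_all add: divide_strict_right_mono)
  have "phi_plus p k \<in> fixset p k" by (simp add: fixed)
  then show "phi_plus p k \<le> 1" by (simp add: fixset_def)
qed


section \<open>The deterministic iteration\<close>

lemma has_real_derivative_F:
  assumes "odd k"
  shows "(F p k has_real_derivative (1 - p) * maj_deriv k ((1 - p) * x)) (at x)"
proof -
  have "((\<lambda>x. maj k ((1 - p) * x)) has_real_derivative maj_deriv k ((1 - p) * x) * (1 - p)) (at x)"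
    by (rule DERIV_chain2[OF has_real_derivative_maj[OF assms]]) (auto intro!: derivative_eq_intros)
  then show ?thesis unfolding F_eq_maj[abs_def] by (simp add: mult.commute)
qed

lemma F_greater_between_fixed_points:
  assumes k: "odd k" "3 \<le> k" and p: "0 \<le> p" "p < pk_star k"
    and x: "phi_minus p k < x" "x < phi_plus p k"
  shows "x < F p k x"
proof -
  have p1: "p < 1" using p pk_star_bounds[OF k] by simp
  have "p < 1 - 1 / ratio_max k" using p pk_star_eq[OF k] by simp
  then obtain y1 y2 where y: "1/2 \<le> y1" "y1 < ratio_argmax k" "ratio_argmax k < y2" "y2 \<le> 1"
      "maj_ratio k y1 = 1 / (1 - p)" "maj_ratio k y2 = 1 / (1 - p)"
      "phi_minus p k = y1 / (1 - p)" "phi_plus p k = y2 / (1 - p)"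
    by (rule fixset_below_crit[OF k p(1)]) (rule that, assumption+)
  define y where "y = (1 - p) * x"
  have "y1 < y" "y < y2"
    using x y p1 by (simp_all add: y_def field_simps)
  then have "1 / (1 - p) < maj_ratio k y"
    using maj_ratio_strict_mono[OF k, of y1 y] maj_ratio_strict_antimono[OF k, of y y2] y
    by (cases "y \<le> ratio_argmax k") auto
  then have "y / (1 - p) < maj k y"
    using \<open>y1 < y\<close> y by (simp add: maj_ratio_def pos_less_divide_eq)
  then show ?thesis using p1 by (simp add: y_def F_eq_maj)
qed

text \<open>On \<open>(0, 1/2]\<close> the derivative of \<^const>\<open>maj\<close> is increasing and on \<open>[1/2, 1]\<close>
  decreasing, so \<open>F' = 1\<close> at two points \<open>a < b\<close> forces \<open>(1 - p) a \<le> 1/2\<close>; then \<open>F' < 1\<close>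
  on \<open>(0, a)\<close>, contradicting \<open>F x1 = x1\<close> by the mean value theorem.\<close>

lemma F_deriv_eq_1_unique:
  assumes k: "odd k" "3 \<le> k" and p: "0 \<le> p" "p < 1"
    and x1: "0 < x1" "F p k x1 = x1"
    and ab: "x1 < a" "a < b" "b \<le> 1"
    and deriv_1: "(1 - p) * maj_deriv k ((1 - p) * a) = 1" "(1 - p) * maj_deriv k ((1 - p) * b) = 1"
  shows False
proof -
  let ?F' = "\<lambda>x. (1 - p) * maj_deriv k ((1 - p) * x)"
  have a_lower: "(1 - p) * a \<le> 1/2"
  proof (rule ccontr)
    assume "\<not> ?thesis"
    moreover have "(1 - p) * b \<le> 1" using p ab x1 by (intro mult_le_one) auto
    ultimately have "maj_deriv k ((1 - p) * b) < maj_deriv k ((1 - p) * a)"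
      using maj_deriv_strict_antimono_upper[OF k] ab p by simp
    then have "(1 - p) * maj_deriv k ((1 - p) * b) < (1 - p) * maj_deriv k ((1 - p) * a)"
      using p by simp
    then show False using deriv_1 by simp
  qed
  obtain e where e: "0 < e" "e < x1" "F p k x1 - F p k 0 = x1 * ?F' e"
    using MVT2[OF x1(1), of "F p k" ?F'] has_real_derivative_F[OF k(1)] by force
  have "maj_deriv k ((1 - p) * e) < maj_deriv k ((1 - p) * a)"
    using maj_deriv_strict_mono_lower[OF k] a_lower e ab p by simp
  then have "?F' e < ?F' a" using p by simp
  then have "?F' e < 1" using deriv_1 by simp
  then have "F p k x1 < x1"
    using e x1 by (simp add: F_eq_maj maj_0 k mult_less_cancel_left2)
  then show False using x1 by simp
qed

lemma mu_between_fixed_points: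
  assumes k: "odd k" "3 \<le> k" and p: "0 \<le> p" "p < pk_star k"
  shows "phi_minus p k < mu p k" "mu p k < phi_plus p k"
proof -
  have p1: "p < 1" using p pk_star_bounds[OF k] by simp
  define x1 where "x1 = phi_minus p k"
  define x2 where "x2 = phi_plus p k"
  have fixed: "fixset p k = {0, x1, x2}" "0 < x1" "x1 < x2"
    using fixed_points_below_pk_star[OF k p] by (simp_all add: x1_def x2_def)
  then have x: "F p k x1 = x1" "F p k x2 = x2" "x2 \<le> 1"
    by (auto simp: fixset_def)
  let ?F' = "\<lambda>x. (1 - p) * maj_deriv k ((1 - p) * x)"
  have deriv_F: "deriv (F p k) x = ?F' x" for x
    by (rule DERIV_imp_deriv[OF has_real_derivative_F[OF k(1)]])
  have ex: "\<exists>z. x1 < z \<and> z < x2 \<and> deriv (F p k) z = 1"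
  proof -
    obtain z where "x1 < z" "z < x2" "F p k x2 - F p k x1 = (x2 - x1) * ?F' z"
      using MVT2[OF fixed(3), of "F p k" ?F'] has_real_derivative_F[OF k(1)] by blast
    then show ?thesis using x fixed deriv_F by auto
  qed
  have uniq: "z = z'" if "x1 < z" "z < x2" "deriv (F p k) z = 1"
      "x1 < z'" "z' < x2" "deriv (F p k) z' = 1" for z z'
    using F_deriv_eq_1_unique[OF k p(1) p1 fixed(2) x(1), of z z']
      F_deriv_eq_1_unique[OF k p(1) p1 fixed(2) x(1), of z' z] that x(3) deriv_F
    by (cases z z' rule: linorder_cases) auto
  have "x1 < mu p k \<and> mu p k < x2 \<and> deriv (F p k) (mu p k) = 1"
    unfolding mu_def x1_def[symmetric] x2_def[symmetric] by (rule theI') (use ex uniq in blast)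
  then show "phi_minus p k < mu p k" "mu p k < phi_plus p k"
    by (auto simp: x1_def x2_def)
qed

text \<open>Iterates of a continuous map lying above the diagonal on \<open>(a, b)\<close> cannot stay bounded
  below \<open>b\<close>: they would increase to a fixed point inside \<open>(a, b)\<close>.\<close>

lemma funpow_escapes_interval:
  fixes f :: "real \<Rightarrow> real"
  assumes f: "continuous_on UNIV f" and above: "\<And>x. a < x \<Longrightarrow> x < b \<Longrightarrow> x < f x"
    and x0: "a < x0" and c: "c < b"
  shows "\<exists>T. c < (f ^^ T) x0"
proof (rule ccontr)
  define X where "X t = (f ^^ t) x0" for t
  have X_Suc: "X (Suc t) = f (X t)" for t by (simp add: X_def)
  assume "\<not> ?thesis"
  then have le: "X t \<le> c" for t by (simp add: X_def not_less)
  have gt: "a < X t" for t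
  proof (induction t)
    case (Suc t)
    then show ?case using above[OF Suc] le[of t] c by (simp add: X_Suc)
  qed (simp add: X_def x0)
  have "X t < X (Suc t)" for t
    using above[OF gt[of t]] le[of t] c by (simp add: X_Suc)
  then have inc: "incseq X" by (intro incseq_SucI less_imp_le)
  have bdd: "bdd_above (range X)" using le by (auto simp: bdd_above_def)
  define L where "L = (SUP t. X t)"
  have lim: "X \<longlonglongrightarrow> L" unfolding L_def by (rule LIMSEQ_incseq_SUP[OF bdd inc])
  have "X 0 \<le> L" unfolding L_def by (rule cSUP_upper[OF _ bdd]) simp
  moreover have "L \<le> c" unfolding L_def by (rule cSUP_least) (use le in auto)
  ultimately have L: "a < L" "L < b" using gt[of 0] c by auto
  have "(\<lambda>t. f (X t)) \<longlonglongrightarrow> f L"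
    using f by (intro isCont_tendsto_compose[OF _ lim]) (simp add: continuous_on_eq_continuous_at)
  moreover have "(\<lambda>t. f (X t)) \<longlonglongrightarrow> L"
    using LIMSEQ_Suc[OF lim] by (simp add: X_Suc)
  ultimately have "f L = L" by (rule LIMSEQ_unique)
  then show False using above[OF L] by simp
qed

lemma q_seq_exceeds_mu:
  assumes k: "odd k" "3 \<le> k" and p: "0 \<le> p" "p < pk_star k" and q: "phi_minus p k < q"
  shows "\<exists>T. mu p k < q_seq p k q T"
  unfolding q_seq_def
  by (rule funpow_escapes_interval[OF continuous_on_F _ q mu_between_fixed_points(2)[OF k p]])
    (rule F_greater_between_fixed_points[OF k p])


section \<open>Concentration of the dynamics\<close>

lemma phi_bounds: "finite Nu \<Longrightarrow> 0 \<le> phi Nu c \<and> phi Nu c \<le> 1"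
  unfolding phi_def by (cases "card Nu = 0") (auto simp: divide_le_eq_1 card_gt_0_iff intro!: card_mono)

lemma sample_seen_eq_bernoulli:
  assumes "finite Nu" "Nu \<noteq> {}" "0 \<le> p" "p \<le> 1"
  shows "sample_seen Nu p c = bernoulli_pmf ((1 - p) * phi Nu c)"
proof (rule pmf_eqI)
  fix b :: bool
  have r: "0 \<le> (1 - p) * phi Nu c" "(1 - p) * phi Nu c \<le> 1"
    using phi_bounds[OF assms(1)] assms by (auto simp: mult_le_one)
  have "pmf (sample_seen Nu p c) True
      = (\<integral>v. pmf (bernoulli_pmf p \<bind> (\<lambda>b. return_pmf (\<not> b \<and> c v))) True \<partial>measure_pmf (pmf_of_set Nu))"
    unfolding sample_seen_def by (simp add: pmf_bind)
  also have "\<dots> = (\<integral>v. (1 - p) * of_bool (c v) \<partial>measure_pmf (pmf_of_set Nu))"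
    using assms by (intro Bochner_Integration.integral_cong refl) (auto simp: pmf_bind)
  also have "\<dots> = (\<Sum>v\<in>Nu. (1 - p) * of_bool (c v)) / card Nu"
    using assms by (simp add: integral_pmf_of_set)
  also have "\<dots> = (1 - p) * phi Nu c"
    using assms(1) by (simp add: phi_def sum_distrib_left[symmetric] sum.If_cases Int_def)
  finally show "pmf (sample_seen Nu p c) b = pmf (bernoulli_pmf ((1 - p) * phi Nu c)) b"
    using r by (cases b) (auto simp: pmf_False_conv_True)
qed

lemma pmf_node_update_True:
  assumes "finite Nu" "Nu \<noteq> {}" "0 \<le> p" "p \<le> 1"
  shows "pmf (node_update Nu k p c) True = F p k (phi Nu c)"
proof -
  let ?r = "(1 - p) * phi Nu c"
  have r: "?r \<in> {0..1}"
    using phi_bounds[OF assms(1)] assms by (auto simp: mult_le_one)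
  have "node_update Nu k p c
      = map_pmf (\<lambda>s. k < 2 * card {i \<in> {..<k}. s i}) (Pi_pmf {..<k} False (\<lambda>_. bernoulli_pmf ?r))"
    unfolding node_update_def using sample_seen_eq_bernoulli[OF assms] by simp
  also have "\<dots> = map_pmf (\<lambda>j. k < 2 * j) (binomial_pmf k ?r)"
    using r by (subst binomial_pmf_altdef'[of "{..<k}" k ?r False]) (simp_all add: pmf.map_comp o_def)
  finally show ?thesis
    using r by (simp add: pmf_map vimage_def F_eq_maj maj_eq_prob_binomial)
qed

lemma prob_Pi_pmf_fraction_deviation:
  fixes D :: "'a \<Rightarrow> bool pmf"
  assumes V: "finite V" and S: "S \<subseteq> V" "S \<noteq> {}" and e: "\<epsilon> \<ge> 0"
  shows "measure_pmf.prob (Pi_pmf V dflt D)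
     {f. \<epsilon> \<le> \<bar>real (card {w\<in>S. f w}) / card S - (\<Sum>w\<in>S. pmf (D w) True) / card S\<bar>}
     \<le> 2 * exp (-2 * \<epsilon>\<^sup>2 * card S)"
proof -
  let ?M = "measure_pmf (Pi_pmf V dflt D)"
  let ?X = "\<lambda>i f. of_bool (f i) :: real"
  have fin: "finite S" using V S finite_subset by blast
  have cS: "card S > 0" using fin S by auto
  have "prob_space.indep_vars ?M (\<lambda>_. count_space UNIV) (\<lambda>i f. f i) S"
    using prob_space.indep_vars_subset[OF measure_pmf.prob_space_axioms indep_vars_Pi_pmf[OF V] S(1)] .
  then have "prob_space.indep_vars ?M (\<lambda>_. borel) ?X S"
    by (rule prob_space.indep_vars_compose2[OF measure_pmf.prob_space_axioms]) auto
  then interpret H: Hoeffding_ineq ?M S ?X "\<lambda>_. 0" "\<lambda>_. 1" "\<Sum>i\<in>S. measure_pmf.expectation (Pi_pmf V dflt D) (?X i)"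
    by unfold_locales (use fin in auto)
  have "measure_pmf.expectation (Pi_pmf V dflt D) (?X i) = pmf (D i) True" if "i \<in> S" for i
  proof -
    have "map_pmf (\<lambda>f. f i) (Pi_pmf V dflt D) = D i"
      using Pi_pmf_component[OF V, of i dflt D] that S by auto
    then have "measure_pmf.expectation (Pi_pmf V dflt D) (?X i) = measure_pmf.expectation (D i) of_bool"
      by (metis integral_map_pmf)
    then show ?thesis by (simp add: integral_measure_pmf_real[where A="{True, False}"])
  qed
  then have mean: "(\<Sum>i\<in>S. measure_pmf.expectation (Pi_pmf V dflt D) (?X i)) = (\<Sum>w\<in>S. pmf (D w) True)"
    by (rule sum.cong[OF refl])
  have count: "real (card {w\<in>S. f w}) = (\<Sum>i\<in>S. ?X i f)" for f
    using fin by (simp add: sum.If_cases Int_def)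
  have scale: "\<epsilon> \<le> \<bar>a / card S - b / card S\<bar> \<longleftrightarrow> \<epsilon> * card S \<le> \<bar>a - b\<bar>" for a b :: real
    using cS by (simp add: diff_divide_distrib[symmetric] pos_le_divide_eq)
  have "{f. \<epsilon> \<le> \<bar>real (card {w\<in>S. f w}) / card S - (\<Sum>w\<in>S. pmf (D w) True) / card S\<bar>}
      = {f \<in> space ?M. \<epsilon> * card S \<le> \<bar>(\<Sum>i\<in>S. ?X i f) - (\<Sum>i\<in>S. measure_pmf.expectation (Pi_pmf V dflt D) (?X i))\<bar>}"
    by (auto simp: mean count scale)
  also have "measure_pmf.prob (Pi_pmf V dflt D) \<dots> \<le> 2 * exp (-2 * (\<epsilon> * card S)\<^sup>2 / (\<Sum>i\<in>S. (1 - 0)\<^sup>2))"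
    using H.Hoeffding_ineq_abs_ge[of "\<epsilon> * card S"] e cS by simp
  also have "-2 * (\<epsilon> * card S)\<^sup>2 / (\<Sum>i\<in>S. (1 - 0::real)\<^sup>2) = -2 * \<epsilon>\<^sup>2 * card S"
    using cS by (simp add: power2_eq_square)
  finally show ?thesis .
qed

lemma prob_bind_pmf_le:
  assumes K: "K \<ge> 0" and bound: "\<And>x. x \<in> set_pmf M \<Longrightarrow> x \<notin> A \<Longrightarrow> measure_pmf.prob (f x) B \<le> K"
  shows "measure_pmf.prob (bind_pmf M f) B \<le> measure_pmf.prob M A + K"
proof -
  have pointwise: "emeasure (f x) B \<le> ennreal (indicator A x + K)" if "x \<in> set_pmf M" for x
  proof (cases "x \<in> A")
    case True
    then show ?thesis using K by (simp add: measure_pmf.emeasure_eq_measure ennreal_leI add_increasing2)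
  next
    case False
    then show ?thesis using bound[OF that] by (simp add: measure_pmf.emeasure_eq_measure ennreal_leI)
  qed
  have "ennreal (measure_pmf.prob (bind_pmf M f) B) = (\<integral>\<^sup>+x. emeasure (f x) B \<partial>M)"
    by (simp add: measure_pmf.emeasure_eq_measure[symmetric])
  also have "\<dots> \<le> (\<integral>\<^sup>+x. ennreal (indicator A x) + ennreal K \<partial>M)"
    using pointwise K by (intro nn_integral_mono_AE AE_pmfI) (simp add: ennreal_plus)
  also have "\<dots> = ennreal (measure_pmf.prob M A + K)"
    using K by (simp add: nn_integral_add ennreal_indicator measure_pmf.emeasure_eq_measure
        measure_pmf.emeasure_space_1 ennreal_plus)
  finally show ?thesis
    using K by (subst (asm) ennreal_le_iff) auto
qed


definition min_degree_at_least :: "(nat \<Rightarrow> nat set) \<Rightarrow> nat set \<Rightarrow> real \<Rightarrow> bool" where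
  "min_degree_at_least N V d \<longleftrightarrow>
     finite V \<and> 0 \<le> d \<and> (\<forall>v\<in>V. N v \<subseteq> V \<and> N v \<noteq> {} \<and> d \<le> card (N v))"

definition tracks_mean_field ::
  "(nat \<Rightarrow> nat set) \<Rightarrow> nat set \<Rightarrow> nat \<Rightarrow> real \<Rightarrow> real \<Rightarrow> nat \<Rightarrow> real \<Rightarrow> (nat \<Rightarrow> bool) list \<Rightarrow> bool" where
  "tracks_mean_field N V k p q t \<epsilon> cs \<longleftrightarrow>
     (\<forall>s\<le>t. \<forall>v\<in>V. \<bar>phi (N v) (cs ! s) - q_seq p k q s\<bar> \<le> \<epsilon>)"

lemma mean_dist_less:
  fixes g :: "'a \<Rightarrow> real"
  assumes "finite A" "A \<noteq> {}" "\<And>w. w \<in> A \<Longrightarrow> \<bar>g w - y\<bar> < r"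
  shows "\<bar>(\<Sum>w\<in>A. g w) / card A - y\<bar> < r"
proof -
  have cA: "card A > 0" using assms by (simp add: card_gt_0_iff)
  have "\<bar>(\<Sum>w\<in>A. g w) / card A - y\<bar> = \<bar>\<Sum>w\<in>A. g w - y\<bar> / card A"
    using cA by (simp add: sum_subtractf field_simps)
  also have "\<dots> \<le> (\<Sum>w\<in>A. \<bar>g w - y\<bar>) / card A"
    by (intro divide_right_mono sum_abs) simp
  also have "\<dots> < (\<Sum>w\<in>A. r) / card A"
    using assms cA by (intro divide_strict_right_mono sum_strict_mono) auto
  also have "\<dots> = r" using cA by simp
  finally show ?thesis .
qed

lemma Pi_pmf_phi_deviation:
  assumes deg: "min_degree_at_least N V d" and e: "\<epsilon> > 0"
    and mean: "\<And>v. v \<in> V \<Longrightarrow> \<bar>(\<Sum>w\<in>N v. pmf (D w) True) / card (N v) - y\<bar> < \<epsilon>/2"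
  shows "measure_pmf.prob (Pi_pmf V False D) {c. \<exists>v\<in>V. \<epsilon> < \<bar>phi (N v) c - y\<bar>}
     \<le> card V * (2 * exp (-(\<epsilon>\<^sup>2/2) * d))"
proof -
  have V: "finite V" using deg by (simp add: min_degree_at_least_def)
  define A where "A v = {c. \<epsilon>/2 \<le> \<bar>phi (N v) c - (\<Sum>w\<in>N v. pmf (D w) True) / card (N v)\<bar>}" for v
  have "{c. \<exists>v\<in>V. \<epsilon> < \<bar>phi (N v) c - y\<bar>} \<subseteq> (\<Union>v\<in>V. A v)"
  proof safe
    fix c v assume "v \<in> V" "\<epsilon> < \<bar>phi (N v) c - y\<bar>"
    then have "c \<in> A v" using mean[of v] unfolding A_def by simp argo
    then show "c \<in> (\<Union>v\<in>V. A v)" using \<open>v \<in> V\<close> by blast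
  qed
  then have "measure_pmf.prob (Pi_pmf V False D) {c. \<exists>v\<in>V. \<epsilon> < \<bar>phi (N v) c - y\<bar>}
      \<le> measure_pmf.prob (Pi_pmf V False D) (\<Union>v\<in>V. A v)"
    by (rule measure_pmf.finite_measure_mono) simp
  also have "\<dots> \<le> (\<Sum>v\<in>V. measure_pmf.prob (Pi_pmf V False D) (A v))"
    by (rule measure_UNION_le[OF V]) simp
  also have "\<dots> \<le> (\<Sum>v\<in>V. 2 * exp (-(\<epsilon>\<^sup>2/2) * d))"
  proof (rule sum_mono)
    fix v assume v: "v \<in> V"
    then have Nv: "N v \<subseteq> V" "N v \<noteq> {}" "d \<le> card (N v)"
      using deg by (auto simp: min_degree_at_least_def)
    have "measure_pmf.prob (Pi_pmf V False D) (A v) \<le> 2 * exp (-2 * (\<epsilon>/2)\<^sup>2 * card (N v))"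
      using prob_Pi_pmf_fraction_deviation[OF V Nv(1,2), of "\<epsilon>/2" False D] e
      unfolding A_def phi_def by simp
    also have "\<dots> \<le> 2 * exp (-(\<epsilon>\<^sup>2/2) * d)"
      using Nv(3) e by (simp add: power_divide mult_left_mono)
    finally show "measure_pmf.prob (Pi_pmf V False D) (A v) \<le> 2 * exp (-(\<epsilon>\<^sup>2/2) * d)" .
  qed
  finally show ?thesis by simp
qed

lemma init_config_deviation:
  assumes deg: "min_degree_at_least N V d" and e: "\<epsilon> > 0" and q: "0 \<le> q" "q \<le> 1"
  shows "measure_pmf.prob (init_config V q) {c. \<exists>v\<in>V. \<epsilon> < \<bar>phi (N v) c - q\<bar>}
     \<le> card V * (2 * exp (-(\<epsilon>\<^sup>2/2) * d))"
  unfolding init_config_def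
proof (rule Pi_pmf_phi_deviation[OF deg e])
  fix v assume "v \<in> V"
  then have "finite (N v)" "N v \<noteq> {}"
    using deg finite_subset by (auto simp: min_degree_at_least_def)
  then show "\<bar>(\<Sum>w\<in>N v. pmf (bernoulli_pmf q) True) / card (N v) - q\<bar> < \<epsilon>/2"
    using q e by simp
qed

lemma config_step_deviation:
  assumes deg: "min_degree_at_least N V d" and e: "\<epsilon> > 0" and p: "0 \<le> p" "p \<le> 1"
    and close: "\<And>u. u \<in> V \<Longrightarrow> \<bar>F p k (phi (N u) c) - y\<bar> < \<epsilon>/2"
  shows "measure_pmf.prob (config_step N V k p c) {c'. \<exists>v\<in>V. \<epsilon> < \<bar>phi (N v) c' - y\<bar>}
     \<le> card V * (2 * exp (-(\<epsilon>\<^sup>2/2) * d))"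
  unfolding config_step_def
proof (rule Pi_pmf_phi_deviation[OF deg e])
  fix v assume v: "v \<in> V"
  have V: "finite V" using deg by (simp add: min_degree_at_least_def)
  have node: "pmf (node_update (N w) k p c) True = F p k (phi (N w) c)" if "w \<in> V" for w
    using that deg V p by (intro pmf_node_update_True) (auto simp: min_degree_at_least_def finite_subset)
  have "N v \<subseteq> V" "N v \<noteq> {}" using v deg by (auto simp: min_degree_at_least_def)
  then show "\<bar>(\<Sum>w\<in>N v. pmf (node_update (N w) k p c) True) / card (N v) - y\<bar> < \<epsilon>/2"
    using V close node by (intro mean_dist_less) (auto intro: finite_subset)
qed


lemma q_seq_0: "q_seq p k q 0 = q"
  by (simp add: q_seq_def)

lemma q_seq_Suc: "q_seq p k q (Suc t) = F p k (q_seq p k q t)"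
  by (simp add: q_seq_def)

lemma q_seq_bounds: "0 \<le> p \<Longrightarrow> p \<le> 1 \<Longrightarrow> 0 \<le> q \<Longrightarrow> q \<le> 1 \<Longrightarrow> 0 \<le> q_seq p k q t \<and> q_seq p k q t \<le> 1"
  by (induction t) (auto simp: q_seq_0 q_seq_Suc F_eq_maj mult_le_one intro!: maj_bounds)

lemma F_modulus_of_continuity:
  assumes "\<epsilon> > 0"
  obtains \<eta> where "\<eta> > 0"
    "\<And>x y. x \<in> {0..1} \<Longrightarrow> y \<in> {0..1} \<Longrightarrow> \<bar>x - y\<bar> < \<eta> \<Longrightarrow> \<bar>F p k x - F p k y\<bar> < \<epsilon>"
proof -
  have "uniformly_continuous_on {0..1} (F p k)"
    by (intro compact_uniformly_continuous continuous_on_F) auto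
  then show ?thesis
    using that assms unfolding uniformly_continuous_on_def dist_real_def by metis
qed

lemma length_traj: "cs \<in> set_pmf (traj N V k p q t) \<Longrightarrow> length cs = Suc t"
  by (induction t arbitrary: cs) auto

lemma tracks_mean_field_snoc:
  assumes "length cs = Suc t" "tracks_mean_field N V k p q t \<eta> cs" "\<eta> \<le> \<epsilon>"
    and "\<forall>v\<in>V. \<bar>phi (N v) c - q_seq p k q (Suc t)\<bar> \<le> \<epsilon>"
  shows "tracks_mean_field N V k p q (Suc t) \<epsilon> (cs @ [c])"
  using assms unfolding tracks_mean_field_def
  by (auto simp: nth_append le_Suc_eq) (meson order.trans)

lemma prob_not_tracks_Suc_le:
  assumes deg: "min_degree_at_least N V d" and p: "0 \<le> p" "p \<le> 1" and e: "\<epsilon> > 0" "\<eta> \<le> \<epsilon>"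
    and F_close: "\<And>x. x \<in> {0..1} \<Longrightarrow> \<bar>x - q_seq p k q t\<bar> \<le> \<eta> \<Longrightarrow>
        \<bar>F p k x - q_seq p k q (Suc t)\<bar> < \<epsilon>/2"
  shows "measure_pmf.prob (traj N V k p q (Suc t)) {cs. \<not> tracks_mean_field N V k p q (Suc t) \<epsilon> cs}
    \<le> measure_pmf.prob (traj N V k p q t) {cs. \<not> tracks_mean_field N V k p q t \<eta> cs}
      + card V * (2 * exp (-(\<epsilon>\<^sup>2/2) * d))"
  unfolding traj.simps
proof (rule prob_bind_pmf_le)
  fix cs assume cs: "cs \<in> set_pmf (traj N V k p q t)"
    and "cs \<notin> {cs. \<not> tracks_mean_field N V k p q t \<eta> cs}"
  then have good: "tracks_mean_field N V k p q t \<eta> cs" by simp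
  have len: "length cs = Suc t" using length_traj[OF cs] .
  then have last: "last cs = cs ! t" by (metis diff_Suc_1 last_conv_nth list.size(3) nat.distinct(1))
  have V: "finite V" using deg by (simp add: min_degree_at_least_def)
  have "\<bar>F p k (phi (N u) (last cs)) - q_seq p k q (Suc t)\<bar> < \<epsilon>/2" if u: "u \<in> V" for u
  proof (rule F_close)
    have "finite (N u)" using u deg V by (auto simp: min_degree_at_least_def intro: finite_subset)
    then show "phi (N u) (last cs) \<in> {0..1}" using phi_bounds by simp
    show "\<bar>phi (N u) (last cs) - q_seq p k q t\<bar> \<le> \<eta>"
      using good u unfolding last tracks_mean_field_def by simp
  qed
  then have "measure_pmf.prob (config_step N V k p (last cs)) {c. \<exists>v\<in>V. \<epsilon> < \<bar>phi (N v) c - q_seq p k q (Suc t)\<bar>}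
      \<le> card V * (2 * exp (-(\<epsilon>\<^sup>2/2) * d))"
    by (rule config_step_deviation[OF deg e(1) p])
  moreover have "(\<lambda>c. cs @ [c]) -` {cs. \<not> tracks_mean_field N V k p q (Suc t) \<epsilon> cs}
      \<subseteq> {c. \<exists>v\<in>V. \<epsilon> < \<bar>phi (N v) c - q_seq p k q (Suc t)\<bar>}"
    using tracks_mean_field_snoc[OF len good e(2)] by (force simp: not_le)
  ultimately show "measure_pmf.prob (map_pmf (\<lambda>c. cs @ [c]) (config_step N V k p (last cs)))
      {cs. \<not> tracks_mean_field N V k p q (Suc t) \<epsilon> cs} \<le> card V * (2 * exp (-(\<epsilon>\<^sup>2/2) * d))"
    by (auto intro: order.trans[OF measure_pmf.finite_measure_mono])
qed simp

text \<open>The induction is over all tolerances \<open>\<epsilon>\<close>: tracking round \<open>t + 1\<close> to within \<open>\<epsilon>\<close>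
  needs round \<open>t\<close> tracked to within a modulus of continuity of \<open>F\<close> for \<open>\<epsilon>/2\<close>.\<close>

lemma traj_deviation_bound:
  assumes p: "0 \<le> p" "p \<le> 1" and q: "0 \<le> q" "q \<le> 1" and e: "\<epsilon> > 0"
  shows "\<exists>a>0. \<forall>N V d. min_degree_at_least N V d \<longrightarrow>
     measure_pmf.prob (traj N V k p q t) {cs. \<not> tracks_mean_field N V k p q t \<epsilon> cs}
       \<le> Suc t * (card V * (2 * exp (-a * d)))"
  using e
proof (induction t arbitrary: \<epsilon>)
  case 0
  have "measure_pmf.prob (traj N V k p q 0) {cs. \<not> tracks_mean_field N V k p q 0 \<epsilon> cs}
      \<le> card V * (2 * exp (-(\<epsilon>\<^sup>2/2) * d))" if "min_degree_at_least N V d" for N V d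
    using init_config_deviation[OF that 0 q]
    by (simp add: tracks_mean_field_def q_seq_0 vimage_def not_le)
  then show ?case using 0 by (intro exI[of _ "\<epsilon>\<^sup>2/2"]) simp
next
  case (Suc t)
  obtain \<eta> where \<eta>: "\<eta> > 0" "\<And>x y. x \<in> {0..1} \<Longrightarrow> y \<in> {0..1} \<Longrightarrow> \<bar>x - y\<bar> < \<eta> \<Longrightarrow>
      \<bar>F p k x - F p k y\<bar> < \<epsilon>/2"
    using F_modulus_of_continuity[of "\<epsilon>/2"] Suc.prems by auto
  define \<eta>' where "\<eta>' = min \<epsilon> (\<eta>/2)"
  have \<eta>': "0 < \<eta>'" "\<eta>' \<le> \<epsilon>" "\<eta>' < \<eta>" using \<eta> Suc.prems by (auto simp: \<eta>'_def)
  obtain a0 where a0: "a0 > 0" "\<And>N V d. min_degree_at_least N V d \<Longrightarrow>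
     measure_pmf.prob (traj N V k p q t) {cs. \<not> tracks_mean_field N V k p q t \<eta>' cs}
       \<le> Suc t * (card V * (2 * exp (-a0 * d)))"
    using Suc.IH[OF \<eta>'(1)] by blast
  define a where "a = min a0 (\<epsilon>\<^sup>2/2)"
  have a: "0 < a" "a \<le> a0" "a \<le> \<epsilon>\<^sup>2/2" using a0 Suc.prems by (auto simp: a_def)
  have "measure_pmf.prob (traj N V k p q (Suc t)) {cs. \<not> tracks_mean_field N V k p q (Suc t) \<epsilon> cs}
      \<le> Suc (Suc t) * (card V * (2 * exp (-a * d)))" if deg: "min_degree_at_least N V d" for N V d
  proof -
    have d: "0 \<le> d" using deg by (simp add: min_degree_at_least_def)
    have "\<bar>F p k x - q_seq p k q (Suc t)\<bar> < \<epsilon>/2"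
      if "x \<in> {0..1}" "\<bar>x - q_seq p k q t\<bar> \<le> \<eta>'" for x
      using that \<eta>(2)[of x "q_seq p k q t"] \<eta>' q_seq_bounds[OF p q] by (simp add: q_seq_Suc)
    then have "measure_pmf.prob (traj N V k p q (Suc t)) {cs. \<not> tracks_mean_field N V k p q (Suc t) \<epsilon> cs}
        \<le> Suc t * (card V * (2 * exp (-a0 * d))) + card V * (2 * exp (-(\<epsilon>\<^sup>2/2) * d))"
      using prob_not_tracks_Suc_le[OF deg p Suc.prems \<eta>'(2)] a0(2)[OF deg] by fastforce
    also have "\<dots> \<le> Suc t * (card V * (2 * exp (-a * d))) + card V * (2 * exp (-a * d))"
    proof -
      have "a * d \<le> a0 * d" "a * d \<le> \<epsilon>\<^sup>2/2 * d" using a d by (intro mult_right_mono; simp)+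
      then show ?thesis by (intro add_mono mult_left_mono) auto
    qed
    finally show ?thesis by (simp add: algebra_simps)
  qed
  then show ?case using a(1) by blast
qed


lemma eventually_linear_mult_exp_le:
  fixes \<delta> :: "nat \<Rightarrow> real"
  assumes \<delta>: "\<delta> \<in> \<omega>(\<lambda>n. ln (real n))" "\<And>n. 0 \<le> \<delta> n" and C: "C > 0"
  shows "\<forall>\<^sub>F n in at_top. C * real n * exp (- \<delta> n) \<le> exp (- \<delta> n / 2)"
proof -
  have "filterlim (\<lambda>n::nat. ln (real n)) at_top at_top"
    by (intro filterlim_compose[OF ln_at_top] filterlim_real_sequentially)
  then have "\<forall>\<^sub>F n in at_top. ln C \<le> ln (real n)"
    by (simp add: filterlim_at_top)
  moreover have "\<forall>\<^sub>F n in at_top. 4 * norm (ln (real n)) \<le> norm (\<delta> n)"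
    using \<delta>(1) by (rule smallomegaD)
  ultimately show ?thesis
    using eventually_ge_at_top[of 1]
  proof eventually_elim
    case (elim n)
    have "4 * ln (real n) \<le> \<delta> n" using elim(2,3) \<delta>(2)[of n] by simp
    moreover have "ln (C * real n) = ln C + ln (real n)" using C elim(3) by (simp add: ln_mult)
    ultimately have "ln (C * real n) \<le> \<delta> n / 2" using elim(1) by linarith
    then have "C * real n \<le> exp (\<delta> n / 2)"
      using C elim(3) by (subst ln_le_cancel_iff[symmetric]) auto
    then have "C * real n * exp (- \<delta> n) \<le> exp (\<delta> n / 2) * exp (- \<delta> n)"
      by (simp add: mult_right_mono)
    then show ?case by (simp flip: exp_add)
  qed
qed

lemma min_degree_at_least_nbhd:
  assumes "1 \<le> real (Min ((\<lambda>v. card (nbhd G n v)) ` {1..n}))"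
  shows "min_degree_at_least (nbhd G n) {1..n} (real (Min ((\<lambda>v. card (nbhd G n v)) ` {1..n})))"
  unfolding min_degree_at_least_def
proof (intro conjI ballI)
  fix v assume v: "v \<in> {1..n}"
  show "nbhd G n v \<subseteq> {1..n}" by (auto simp: nbhd_def)
  show le: "real (Min ((\<lambda>v. card (nbhd G n v)) ` {1..n})) \<le> real (card (nbhd G n v))"
    using v by (intro of_nat_mono Min_le) auto
  show "nbhd G n v \<noteq> {}" using le assms by auto
qed simp_all

lemma prob_within_eq_1_minus_not_tracks:
  "measure_pmf.prob M {cs. \<forall>t\<le>T. \<forall>v\<in>V.
       q_seq p k q t - \<gamma> \<le> phi (N v) (cs ! t) \<and> phi (N v) (cs ! t) \<le> q_seq p k q t + \<gamma>}
   = 1 - measure_pmf.prob M {cs. \<not> tracks_mean_field N V k p q T \<gamma> cs}"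
proof -
  have "{cs. \<forall>t\<le>T. \<forall>v\<in>V.
         q_seq p k q t - \<gamma> \<le> phi (N v) (cs ! t) \<and> phi (N v) (cs ! t) \<le> q_seq p k q t + \<gamma>}
      = space M - {cs. \<not> tracks_mean_field N V k p q T \<gamma> cs}"
    by (auto simp: tracks_mean_field_def abs_le_iff algebra_simps)
  then show ?thesis by (simp only: measure_pmf.prob_compl sets_measure_pmf UNIV_I)
qed

theorem traj_tracks_mean_field_whp:
  fixes G :: "nat \<Rightarrow> nat \<Rightarrow> nat \<Rightarrow> bool"
  assumes mindeg: "(\<lambda>n. real (Min ((\<lambda>v. card (nbhd G n v)) ` {1..n}))) \<in> \<omega>(\<lambda>n. ln (real n))"
    and p: "0 \<le> p" "p \<le> 1" and q: "0 \<le> q" "q \<le> 1" and \<gamma>: "\<gamma> > 0"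
  shows "\<exists>h. h \<in> \<omega>(\<lambda>n. ln (real n)) \<and>
    (\<forall>\<^sub>F n in at_top.
       measure_pmf.prob (traj (nbhd G n) {1..n} k p q T)
         {cs. \<forall>t\<le>T. \<forall>v\<in>{1..n}.
                q_seq p k q t - \<gamma> \<le> phi (nbhd G n v) (cs ! t) \<and>
                phi (nbhd G n v) (cs ! t) \<le> q_seq p k q t + \<gamma>}
       \<ge> 1 - exp (- h n))"
proof -
  define \<delta> where "\<delta> n = real (Min ((\<lambda>v. card (nbhd G n v)) ` {1..n}))" for n
  obtain a where a: "a > 0" and bound: "\<And>N V d. min_degree_at_least N V d \<Longrightarrow>
     measure_pmf.prob (traj N V k p q T) {cs. \<not> tracks_mean_field N V k p q T \<gamma> cs}
       \<le> Suc T * (card V * (2 * exp (-a * d)))"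
    using traj_deviation_bound[OF p q \<gamma>, of k T] by blast
  have a\<delta>: "(\<lambda>n. a * \<delta> n) \<in> \<omega>(\<lambda>n. ln (real n))"
    using mindeg a by (simp add: \<delta>_def)
  have "\<forall>\<^sub>F n in at_top. 1 \<le> \<delta> n"
  proof -
    have "\<forall>\<^sub>F n in at_top. 1 * norm (ln (real n)) \<le> norm (\<delta> n)"
      using mindeg unfolding \<delta>_def by (rule smallomegaD)
    moreover have "\<forall>\<^sub>F n::nat in at_top. 1 \<le> ln (real n)"
      using filterlim_compose[OF ln_at_top filterlim_real_sequentially] by (simp add: filterlim_at_top)
    ultimately show ?thesis by eventually_elim (auto simp: \<delta>_def)
  qed
  moreover have "\<forall>\<^sub>F n in at_top.
      (2 * Suc T) * real n * exp (- (a * \<delta> n)) \<le> exp (- (a * \<delta> n) / 2)"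
    using a by (intro eventually_linear_mult_exp_le a\<delta>) (simp_all add: \<delta>_def)
  ultimately have "\<forall>\<^sub>F n in at_top.
      measure_pmf.prob (traj (nbhd G n) {1..n} k p q T)
         {cs. \<forall>t\<le>T. \<forall>v\<in>{1..n}.
                q_seq p k q t - \<gamma> \<le> phi (nbhd G n v) (cs ! t) \<and>
                phi (nbhd G n v) (cs ! t) \<le> q_seq p k q t + \<gamma>}
       \<ge> 1 - exp (- (a * \<delta> n / 2))"
  proof eventually_elim
    case (elim n)
    let ?M = "traj (nbhd G n) {1..n} k p q T"
    have "min_degree_at_least (nbhd G n) {1..n} (\<delta> n)"
      using min_degree_at_least_nbhd elim(1) unfolding \<delta>_def .
    then have "measure_pmf.prob ?M {cs. \<not> tracks_mean_field (nbhd G n) {1..n} k p q T \<gamma> cs}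
        \<le> Suc T * (card {1..n} * (2 * exp (-a * \<delta> n)))"
      by (rule bound)
    also have "\<dots> = (2 * Suc T) * real n * exp (- (a * \<delta> n))" by simp
    also have "\<dots> \<le> exp (- (a * \<delta> n) / 2)" by (rule elim(2))
    finally show ?case by (simp add: prob_within_eq_1_minus_not_tracks)
  qed
  moreover have "(\<lambda>n. a * \<delta> n / 2) \<in> \<omega>(\<lambda>n. ln (real n))"
    using a\<delta> by simp
  ultimately show ?thesis by blast
qed


theorem proposition5p12:
  fixes G :: "nat \<Rightarrow> nat \<Rightarrow> nat \<Rightarrow> bool" and k :: nat and p q :: real
  assumes graph: "\<And>n u v. G n u v \<Longrightarrow> u \<in> {1..n} \<and> v \<in> {1..n} \<and> u \<noteq> v \<and> G n v u"
    and mindeg: "(\<lambda>n. real (Min ((\<lambda>v. card (nbhd G n v)) ` {1..n}))) \<in> \<omega>(\<lambda>n. ln (real n))"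
    and k: "odd k" "3 \<le> k"
    and q: "1/2 < q" "q \<le> 1"
    and p: "0 \<le> p" "p < pkq_star k q"
    and qrange: "phi_minus p k < q" "q \<le> mu p k"
  shows "\<exists>T. q_seq p k q T > mu p k \<and>
           (\<forall>\<gamma>>0. \<exists>h. h \<in> \<omega>(\<lambda>n. ln (real n)) \<and>
              (\<forall>\<^sub>F n in at_top.
                 measure_pmf.prob (traj (nbhd G n) {1..n} k p q T)
                   {cs. \<forall>t\<le>T. \<forall>v\<in>{1..n}.
                          q_seq p k q t - \<gamma> \<le> phi (nbhd G n v) (cs ! t) \<and>
                          phi (nbhd G n v) (cs ! t) \<le> q_seq p k q t + \<gamma>}
                 \<ge> 1 - exp (- h n)))"
proof -
  have p_less: "p < pk_star k"
    using less_pkq_star_imp_less_pk_star[OF k q p(2)] .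
  then have "p \<le> 1"
    using pk_star_bounds[OF k] by simp
  moreover obtain T where "mu p k < q_seq p k q T"
    using q_seq_exceeds_mu[OF k p(1) p_less qrange(1)] by blast
  ultimately show ?thesis
    using traj_tracks_mean_field_whp[OF mindeg p(1)] q by fastforce
qed

end
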